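(* Let $L$ be a frame and $f\in\overline{\mathrm{F}}(L)$. The following are equivalent: (1) for every $g\in\overline{\mathrm{F}}(L)$, $f\vee^{\overline{\mathrm{F}}(L)}g=\boldsymbol{+\infty}$ implies $g=\boldsymbol{+\infty}$; (2) $\big(\bigvee_{s\in\mathbb{Q}}f(\textsf{---},s)\big)^\ast=0$; (3) $\bigwedge_{r\in\mathbb{Q}}f(r,\textsf{---})=0$.
   Context: $\mathbb{Q}$ is the rationals. A sublocale of $L$ is a subset closed under arbitrary meets and such that $x\to s\in S$ for $x\in L$, $s\in S$; $\mathrm{coS}(L)$ is the frame of all sublocales ordered by reverse inclusion (bottom $0=L$, top $1=\{1\}$); all lattice operations and pseudocomplements $^\ast$ here are taken in $\mathrm{coS}(L)$. The frame $\mathfrak{L}(\overline{\mathbb{IR}})$ is presented by generators $(r,\textsf{---})$, $(\textsf{---},s)$ ($r,s\in\mathbb{Q}$) subject to (r1) $(r,\textsf{---})\wedge(\textsf{---},s)=0$ whenever $r\ge s$; (r3) $(r,\textsf{---})=\bigvee_{s>r}(s,\textsf{---})$; (r4) $(\textsf{---},s)=\bigvee_{r<s}(\textsf{---},r)$. $\overline{\mathrm{F}}(L)$ (arbitrary extended real functions on $L$) is the set of frame homomorphisms $f\colon\mathfrak{L}(\overline{\mathbb{IR}})\to\mathrm{coS}(L)$ with $f(r,\textsf{---})^\ast\le f(\textsf{---},s)$ and $f(\textsf{---},s)^\ast\le f(r,\textsf{---})$ for all $r<s$, ordered by $f\le g$ iff $f(r,\textsf{---})\le g(r,\textsf{---})$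 and $g(\textsf{---},s)\le f(\textsf{---},s)$ for all $r,s$; it is a complete lattice. $\boldsymbol{+\infty}$ is its top element, given by $\boldsymbol{+\infty}(r,\textsf{---})=1$ and $\boldsymbol{+\infty}(\textsf{---},s)=0$ for all $r,s$. *)

theory Defs
  imports Complex_Main
begin

definition is_frame :: "'a::complete_lattice itself \<Rightarrow> bool" where
  "is_frame _ \<longleftrightarrow> (\<forall>(x::'a) S. inf x (Sup S) = Sup ((inf x) ` S))"

definition himp :: "'a::complete_lattice \<Rightarrow> 'a \<Rightarrow> 'a" where
  "himp x y = Sup {z. inf z x \<le> y}"

text \<open>Sublocales of L (L = UNIV of type 'a).\<close>
definition sublocale_of :: "'a::complete_lattice set \<Rightarrow> bool" where
  "sublocale_of S \<longleftrightarrow> (\<forall>A. A \<subseteq> S \<longrightarrow> Inf A \<in> S) \<and> (\<forall>x. \<forall>s\<in>S. himp x s \<in> S)"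

text \<open>The frame coS(L): sublocales ordered by reverse inclusion.\<close>
definition coS_le :: "'a set \<Rightarrow> 'a set \<Rightarrow> bool" where
  "coS_le S T \<longleftrightarrow> T \<subseteq> S"

definition coS_bot :: "'a::complete_lattice set" where
  "coS_bot = UNIV"

definition coS_top :: "'a::complete_lattice set" where
  "coS_top = {top}"

definition coS_Sup :: "'a::complete_lattice set set \<Rightarrow> 'a set" where
  "coS_Sup \<S> = \<Inter>\<S>"

definition coS_Inf :: "'a::complete_lattice set set \<Rightarrow> 'a set" where
  "coS_Inf \<S> = \<Inter>{T. sublocale_of T \<and> \<Union>\<S> \<subseteq> T}"

definition coS_meet :: "'a::complete_lattice set \<Rightarrow> 'a set \<Rightarrow> 'a set" where
  "coS_meet S T = coS_Inf {S, T}"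

definition coS_pc :: "'a::complete_lattice set \<Rightarrow> 'a set" where
  "coS_pc S = coS_Sup {T. sublocale_of T \<and> coS_meet T S = coS_bot}"

text \<open>Generators of the frame of extended reals: Up r = (r,---), Down s = (---,s).\<close>
datatype gen = Up rat | Down rat

text \<open>A frame homomorphism from the presented frame to coS(L) is the same as an
  assignment of the generators satisfying the relations (r1),(r3),(r4).\<close>
definition Fbar :: "(gen \<Rightarrow> 'a::complete_lattice set) \<Rightarrow> bool" where
  "Fbar f \<longleftrightarrow>
     (\<forall>g. sublocale_of (f g)) \<and>
     (\<forall>r s. s \<le> r \<longrightarrow> coS_meet (f (Up r)) (f (Down s)) = coS_bot) \<and>
     (\<forall>r. f (Up r) = coS_Sup {f (Up s) | s. s > r}) \<and>
     (\<forall>s. f (Down s) = coS_Sup {f (Down r) | r. r < s}) \<and>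
     (\<forall>r s. r < s \<longrightarrow> coS_le (coS_pc (f (Up r))) (f (Down s))
                     \<and> coS_le (coS_pc (f (Down s))) (f (Up r)))"

definition Fle :: "(gen \<Rightarrow> 'a set) \<Rightarrow> (gen \<Rightarrow> 'a set) \<Rightarrow> bool" where
  "Fle f g \<longleftrightarrow> (\<forall>r. coS_le (f (Up r)) (g (Up r))) \<and> (\<forall>s. coS_le (g (Down s)) (f (Down s)))"

definition posinf :: "gen \<Rightarrow> 'a::complete_lattice set" where
  "posinf x = (case x of Up r \<Rightarrow> coS_top | Down s \<Rightarrow> coS_bot)"

definition Fjoin_is :: "(gen \<Rightarrow> 'a::complete_lattice set) \<Rightarrow> (gen \<Rightarrow> 'a set) \<Rightarrow> (gen \<Rightarrow> 'a set) \<Rightarrow> bool" where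
  "Fjoin_is f g h \<longleftrightarrow> Fbar h \<and> Fle f h \<and> Fle g h \<and>
     (\<forall>k. Fbar k \<and> Fle f k \<and> Fle g k \<longrightarrow> Fle h k)"

end

theory Submission
  imports Defs
begin

text \<open>
  Write \<open>D = \<Squnion>\<^sub>s f(---, s)\<close>, with joins, meets and pseudocomplements taken in coS(L).
  (2) and (3) are equivalent since \<open>D\<^sup>* = \<Sqinter>\<^sub>r f(r, ---)\<close>: the inequalities
  \<open>f(r, ---) \<le> f(---, r + 1)\<^sup>* \<le> D\<^sup>*\<close> give one direction, (r1) and the distributivity of
  coS(L) the other.

  (1) implies (2): for \<open>d = D\<^sup>*\<close>, the function \<open>(r, ---) \<mapsto> d\<^sup>*\<close>, \<open>(---, s) \<mapsto> d\<close>
  lies in \<open>F(L)\<close>, and its join with \<open>f\<close> is \<open>+\<infinity>\<close> because \<open>d \<and> D = 0\<close>; so by (1) it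
  is \<open>+\<infinity>\<close>, i.e. \<open>d = 0\<close>.

  (2) implies (1): if \<open>f \<or> g = +\<infinity>\<close> then \<open>a(s) = f(---, s) \<and> g(---, s) = 0\<close> for every
  \<open>s\<close>, for otherwise \<open>(---, s) \<mapsto> \<Squnion>{a(r) | r < s}\<close> extends to a common upper bound of
  \<open>f\<close> and \<open>g\<close> in \<open>F(L)\<close> other than \<open>+\<infinity>\<close> (this uses \<open>a(r)\<^sup>*\<^sup>* \<le> a(s)\<close> for
  \<open>r < s\<close>, inherited from \<open>f\<close> and \<open>g\<close>). Distributivity then gives \<open>g(---, s) \<and> D = 0\<close>,
  so \<open>g(---, s) \<le> D\<^sup>* = 0\<close>, whence \<open>g = +\<infinity>\<close>.
\<close>

lemma le_himp_iff:
  fixes x y z :: "'a::complete_lattice"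
  assumes frame: "is_frame TYPE('a)"
  shows "z \<le> himp x y \<longleftrightarrow> inf z x \<le> y"
proof
  assume "inf z x \<le> y"
  then show "z \<le> himp x y" unfolding himp_def by (auto intro: Sup_upper)
next
  assume "z \<le> himp x y"
  then have "inf z x \<le> inf x (himp x y)" by (simp add: inf_commute le_infI2)
  also have "\<dots> = Sup ((inf x) ` {z. inf z x \<le> y})"
    using frame unfolding is_frame_def himp_def by blast
  also have "\<dots> \<le> y" by (auto intro!: Sup_least simp: inf_commute)
  finally show "inf z x \<le> y" .
qed

lemma inf_himp_le:
  fixes x y :: "'a::complete_lattice"
  assumes "is_frame TYPE('a)"
  shows "inf (himp x y) x \<le> y"
  using le_himp_iff[OF assms] by blast

lemma himp_inf_distrib:
  fixes x y z :: "'a::complete_lattice"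
  assumes frame: "is_frame TYPE('a)"
  shows "himp x (inf y z) = inf (himp x y) (himp x z)"
proof -
  have "w \<le> himp x (inf y z) \<longleftrightarrow> w \<le> inf (himp x y) (himp x z)" for w
    by (simp add: le_himp_iff[OF frame])
  then show ?thesis by (blast intro: order.antisym)
qed

lemma himp_eq_top:
  fixes x y :: "'a::complete_lattice"
  assumes "x \<le> y"
  shows "himp x y = top"
  unfolding himp_def using assms by (auto intro: top_le Sup_upper le_infI2)

lemma inf_himp_eq:
  fixes x y :: "'a::complete_lattice"
  assumes frame: "is_frame TYPE('a)" and "y \<le> x"
  shows "inf x (himp x y) = y"
  using assms le_himp_iff[OF frame, of y x y] inf_himp_le[OF frame, of x y]
  by (auto intro: order.antisym simp: inf_commute)

lemma sublocale_Inf: "sublocale_of S \<Longrightarrow> A \<subseteq> S \<Longrightarrow> Inf A \<in> S"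
  unfolding sublocale_of_def by blast

lemma sublocale_himp: "sublocale_of S \<Longrightarrow> s \<in> S \<Longrightarrow> himp x s \<in> S"
  unfolding sublocale_of_def by blast

lemma sublocale_top: "sublocale_of S \<Longrightarrow> top \<in> S"
  using sublocale_Inf[of S "{}"] by simp

lemma sublocale_inf: "sublocale_of S \<Longrightarrow> x \<in> S \<Longrightarrow> y \<in> S \<Longrightarrow> inf x y \<in> S"
  using sublocale_Inf[of S "{x, y}"] by simp

lemma sublocale_Inter: "(\<And>S. S \<in> \<S> \<Longrightarrow> sublocale_of S) \<Longrightarrow> sublocale_of (\<Inter>\<S>)"
  unfolding sublocale_of_def by blast

lemma sublocale_UNIV: "sublocale_of UNIV"
  unfolding sublocale_of_def by blast

lemma sublocale_top_singleton: "sublocale_of {top}"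
  unfolding sublocale_of_def by (auto simp: himp_eq_top Inf_top_conv)

lemma coS_Inf_upper: "S \<in> \<S> \<Longrightarrow> S \<subseteq> coS_Inf \<S>"
  unfolding coS_Inf_def by blast

lemma coS_Inf_least: "sublocale_of T \<Longrightarrow> (\<And>S. S \<in> \<S> \<Longrightarrow> S \<subseteq> T) \<Longrightarrow> coS_Inf \<S> \<subseteq> T"
  unfolding coS_Inf_def by blast

lemma sublocale_coS_Inf: "sublocale_of (coS_Inf \<S>)"
  unfolding coS_Inf_def by (rule sublocale_Inter) blast

lemma coS_meet_upper1: "S \<subseteq> coS_meet S T"
  and coS_meet_upper2: "T \<subseteq> coS_meet S T"
  unfolding coS_meet_def by (simp_all add: coS_Inf_upper)

lemma coS_meet_least: "sublocale_of W \<Longrightarrow> S \<subseteq> W \<Longrightarrow> T \<subseteq> W \<Longrightarrow> coS_meet S T \<subseteq> W"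
  unfolding coS_meet_def by (rule coS_Inf_least) auto

lemma sublocale_coS_meet: "sublocale_of (coS_meet S T)"
  unfolding coS_meet_def by (rule sublocale_coS_Inf)

lemma coS_meet_mono: "S \<subseteq> S' \<Longrightarrow> T \<subseteq> T' \<Longrightarrow> coS_meet S T \<subseteq> coS_meet S' T'"
  by (meson coS_meet_least coS_meet_upper1 coS_meet_upper2 sublocale_coS_meet order_trans)

lemma coS_meet_commute: "coS_meet S T = coS_meet T S"
  unfolding coS_meet_def by (simp add: insert_commute)

lemma sublocale_pairwise_infs:
  fixes S T :: "'a::complete_lattice set"
  assumes frame: "is_frame TYPE('a)" and S: "sublocale_of S" and T: "sublocale_of T"
  shows "sublocale_of {inf s t |s t. s \<in> S \<and> t \<in> T}" (is "sublocale_of ?M")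
  unfolding sublocale_of_def
proof (intro conjI allI impI ballI)
  fix A assume A: "A \<subseteq> ?M"
  have "\<forall>a\<in>A. \<exists>p \<in> S \<times> T. a = inf (fst p) (snd p)"
  proof
    fix a assume "a \<in> A"
    with A obtain s t where "s \<in> S" "t \<in> T" "a = inf s t" by blast
    then show "\<exists>p \<in> S \<times> T. a = inf (fst p) (snd p)" by (intro bexI[of _ "(s, t)"]) simp_all
  qed
  then obtain p where p: "\<And>a. a \<in> A \<Longrightarrow> p a \<in> S \<times> T \<and> a = inf (fst (p a)) (snd (p a))"
    by (metis bchoice)
  have "Inf A = (INF a\<in>A. inf (fst (p a)) (snd (p a)))"
    using p by (simp cong: INF_cong)
  also have "\<dots> = inf (INF a\<in>A. fst (p a)) (INF a\<in>A. snd (p a))"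
    by (simp add: INF_inf_distrib)
  finally have "Inf A = inf (INF a\<in>A. fst (p a)) (INF a\<in>A. snd (p a))" .
  moreover have "(INF a\<in>A. fst (p a)) \<in> S" "(INF a\<in>A. snd (p a)) \<in> T"
    using p by (auto simp: mem_Times_iff intro!: sublocale_Inf[OF S] sublocale_Inf[OF T])
  ultimately show "Inf A \<in> ?M" by blast
next
  fix x m assume "m \<in> ?M"
  then obtain s t where "m = inf s t" "s \<in> S" "t \<in> T" by blast
  then have "himp x m = inf (himp x s) (himp x t)" "himp x s \<in> S" "himp x t \<in> T"
    by (simp_all add: himp_inf_distrib[OF frame] sublocale_himp[OF S] sublocale_himp[OF T])
  then show "himp x m \<in> ?M" by blast
qed

lemma coS_meet_eq:
  fixes S T :: "'a::complete_lattice set"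
  assumes frame: "is_frame TYPE('a)" and S: "sublocale_of S" and T: "sublocale_of T"
  shows "coS_meet S T = {inf s t |s t. s \<in> S \<and> t \<in> T}" (is "_ = ?M")
proof
  have "x \<in> ?M" if "x \<in> S" for x
  proof -
    have "inf x top \<in> ?M" using that sublocale_top[OF T] by blast
    then show ?thesis by simp
  qed
  moreover have "x \<in> ?M" if "x \<in> T" for x
  proof -
    have "inf top x \<in> ?M" using that sublocale_top[OF S] by blast
    then show ?thesis by simp
  qed
  ultimately have "S \<subseteq> ?M" "T \<subseteq> ?M" by blast+
  then show "coS_meet S T \<subseteq> ?M"
    by (rule coS_meet_least[OF sublocale_pairwise_infs[OF frame S T]])
  show "?M \<subseteq> coS_meet S T"
  proof
    fix x assume "x \<in> ?M"
    then obtain s t where x: "x = inf s t" and "s \<in> S" "t \<in> T" by blast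
    then have "s \<in> coS_meet S T" "t \<in> coS_meet S T"
      using coS_meet_upper1[of S T] coS_meet_upper2[of T S] by blast+
    then show "x \<in> coS_meet S T" unfolding x by (rule sublocale_inf[OF sublocale_coS_meet])
  qed
qed

lemma coS_meet_Inter_eq_UNIV:
  fixes S :: "'a::complete_lattice set"
  assumes frame: "is_frame TYPE('a)" and S: "sublocale_of S"
    and sublocales: "\<And>T. T \<in> \<T> \<Longrightarrow> sublocale_of T"
    and disjoint: "\<And>T. T \<in> \<T> \<Longrightarrow> coS_meet S T = UNIV"
  shows "coS_meet S (\<Inter>\<T>) = UNIV"
proof -
  have "a \<in> coS_meet S (\<Inter>\<T>)" for a
  proof -
    \<comment> \<open>\<open>s\<close> is the least element of \<open>S\<close> above \<open>a\<close>; \<open>s \<rightarrow> a\<close> lies in every \<open>T\<close>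
      and \<open>a = s \<and> (s \<rightarrow> a)\<close>.\<close>
    define s where "s = Inf {x \<in> S. a \<le> x}"
    have "s \<in> S" unfolding s_def by (rule sublocale_Inf[OF S]) blast
    have "a \<le> s" unfolding s_def by (rule Inf_greatest) simp
    have "himp s a \<in> T" if T: "T \<in> \<T>" for T
    proof -
      have "a \<in> coS_meet S T" using disjoint[OF T] by simp
      then obtain s' t where "s' \<in> S" "t \<in> T" "a = inf s' t"
        using coS_meet_eq[OF frame S sublocales[OF T]] by blast
      moreover from this have "s \<le> s'" unfolding s_def by (intro Inf_lower) simp
      ultimately have "himp s a = himp s t"
        by (simp add: himp_inf_distrib[OF frame] himp_eq_top)
      with \<open>t \<in> T\<close> show ?thesis using sublocale_himp[OF sublocales[OF T]] by simp
    qed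
    then have "himp s a \<in> \<Inter>\<T>" by blast
    moreover have "a = inf s (himp s a)" using inf_himp_eq[OF frame \<open>a \<le> s\<close>] by simp
    ultimately show ?thesis
      using \<open>s \<in> S\<close> coS_meet_eq[OF frame S sublocale_Inter[OF sublocales]] by blast
  qed
  then show ?thesis by blast
qed

lemma sublocale_coS_pc: "sublocale_of (coS_pc S)"
  unfolding coS_pc_def coS_Sup_def by (rule sublocale_Inter) blast

lemma coS_pc_least: "sublocale_of T \<Longrightarrow> coS_meet T S = UNIV \<Longrightarrow> coS_pc S \<subseteq> T"
  unfolding coS_pc_def coS_Sup_def coS_bot_def by blast

lemma coS_meet_pc_eq_UNIV:
  fixes S :: "'a::complete_lattice set"
  assumes frame: "is_frame TYPE('a)" and "sublocale_of S"
  shows "coS_meet (coS_pc S) S = UNIV"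
  unfolding coS_pc_def coS_Sup_def coS_bot_def coS_meet_commute[of _ S]
  using assms by (intro coS_meet_Inter_eq_UNIV) (auto simp: coS_meet_commute)

lemma coS_pc_antimono: "S \<subseteq> T \<Longrightarrow> coS_pc T \<subseteq> coS_pc S"
  unfolding coS_pc_def coS_Sup_def coS_bot_def by (blast dest: coS_meet_mono[OF order_refl])

lemma coS_pc_pc_subset:
  fixes S :: "'a::complete_lattice set"
  assumes "is_frame TYPE('a)" and "sublocale_of S"
  shows "coS_pc (coS_pc S) \<subseteq> S"
  using coS_pc_least[OF assms(2)] coS_meet_pc_eq_UNIV[OF assms] coS_meet_commute by metis

lemma coS_pc_UNIV: "coS_pc UNIV = {top}"
proof -
  have "coS_pc UNIV = \<Inter>{T. sublocale_of T}"
    unfolding coS_pc_def coS_Sup_def coS_bot_def using coS_meet_upper2 by blast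
  then show ?thesis using sublocale_top_singleton sublocale_top by blast
qed

lemma coS_pc_top: "coS_pc {top::'a::complete_lattice} = UNIV"
proof -
  have "sublocale_of T \<Longrightarrow> coS_meet T {top} = UNIV \<Longrightarrow> T = UNIV" for T :: "'a set"
    using coS_meet_least[of T T "{top}"] sublocale_top by blast
  then show ?thesis
    unfolding coS_pc_def coS_Sup_def coS_bot_def using sublocale_UNIV coS_meet_upper1 by blast
qed

lemma Fbar_sublocale: "Fbar f \<Longrightarrow> sublocale_of (f x)"
  unfolding Fbar_def by (elim conjE) (rule spec)

lemma Fbar_meet_Up_Down: "Fbar f \<Longrightarrow> s \<le> r \<Longrightarrow> coS_meet (f (Up r)) (f (Down s)) = UNIV"
  unfolding Fbar_def coS_bot_def by (elim conjE) (erule allE, erule allE, erule mp)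

lemma Fbar_Up_eq: "Fbar f \<Longrightarrow> f (Up r) = \<Inter>{f (Up s) |s. r < s}"
  unfolding Fbar_def coS_Sup_def by (elim conjE) (erule spec)

lemma Fbar_Down_eq: "Fbar f \<Longrightarrow> f (Down s) = \<Inter>{f (Down r) |r. r < s}"
  unfolding Fbar_def coS_Sup_def by (elim conjE) (erule spec)

lemma Fbar_Down_subset_pc_Up: "Fbar f \<Longrightarrow> r < s \<Longrightarrow> f (Down s) \<subseteq> coS_pc (f (Up r))"
  unfolding Fbar_def coS_le_def
  by (elim conjE) (erule allE, erule allE, erule impE, assumption, erule conjunct1)

lemma Fbar_Up_subset_pc_Down: "Fbar f \<Longrightarrow> r < s \<Longrightarrow> f (Up r) \<subseteq> coS_pc (f (Down s))"
  unfolding Fbar_def coS_le_def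
  by (elim conjE) (erule allE, erule allE, erule impE, assumption, erule conjunct2)

lemma Fbar_Down_antimono:
  assumes "Fbar f" and "r \<le> s"
  shows "f (Down s) \<subseteq> f (Down r)"
proof (cases "r = s")
  case False
  with \<open>r \<le> s\<close> have "r < s" by simp
  then show ?thesis using Fbar_Down_eq[OF \<open>Fbar f\<close>, of s] by blast
qed simp

lemma Fbar_Down_subset_pc_pc:
  fixes f :: "gen \<Rightarrow> 'a::complete_lattice set"
  assumes "Fbar f" and "r < s"
  shows "f (Down s) \<subseteq> coS_pc (coS_pc (f (Down r)))"
proof -
  have "coS_pc (f (Down r)) \<subseteq> f (Up r)"
    using assms by (intro coS_pc_least Fbar_sublocale Fbar_meet_Up_Down) simp_all
  then show ?thesis using Fbar_Down_subset_pc_Up[OF assms] coS_pc_antimono by blast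
qed

lemma Fbar_posinf: "Fbar (posinf :: gen \<Rightarrow> 'a::complete_lattice set)"
  unfolding Fbar_def
proof (intro conjI allI impI)
  have "\<exists>s. r < s" "\<exists>s. s < r" for r :: rat using gt_ex lt_ex by blast+
  then show "posinf (Up r) = coS_Sup {posinf (Up s) |s. r < s}"
    and "posinf (Down s) = coS_Sup {posinf (Down r) |r. r < s}" for r s :: rat
    by (auto simp: posinf_def coS_Sup_def)
  show "sublocale_of (posinf x :: 'a set)" for x
    by (cases x) (simp_all add: posinf_def coS_top_def coS_bot_def sublocale_top_singleton sublocale_UNIV)
  show "coS_meet (posinf (Up r)) (posinf (Down s) :: 'a set) = coS_bot" for r s
    using coS_meet_upper2[of UNIV "{top::'a}"] by (auto simp: posinf_def coS_top_def coS_bot_def)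
  show "coS_le (coS_pc (posinf (Up r))) (posinf (Down s) :: 'a set)"
    and "coS_le (coS_pc (posinf (Down s))) (posinf (Up r) :: 'a set)" for r s
    by (simp_all add: posinf_def coS_top_def coS_bot_def coS_le_def coS_pc_top coS_pc_UNIV)
qed

lemma Fbar_eq_posinf_iff:
  assumes g: "Fbar g"
  shows "g = posinf \<longleftrightarrow> (\<forall>s. g (Down s) = UNIV)"
proof
  assume Down: "\<forall>s. g (Down s) = UNIV"
  have "g (Up r) = {top}" for r
  proof -
    have "g (Up r) \<subseteq> coS_pc (g (Down (r + 1)))" using Fbar_Up_subset_pc_Down[OF g] by simp
    then show ?thesis using Down sublocale_top[OF Fbar_sublocale[OF g]] by (auto simp: coS_pc_UNIV)
  qed
  with Down show "g = posinf"
    by (intro ext) (simp add: posinf_def coS_top_def coS_bot_def split: gen.split)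
qed (simp add: posinf_def coS_bot_def)

lemma Fle_posinf: "Fbar f \<Longrightarrow> Fle f posinf"
  unfolding Fle_def coS_le_def posinf_def coS_top_def coS_bot_def
  using sublocale_top[OF Fbar_sublocale] by auto

lemma posinf_Fle_iff:
  assumes "Fbar k"
  shows "Fle posinf k \<longleftrightarrow> k = posinf"
proof
  assume "Fle posinf k"
  then have "\<forall>s. k (Down s) = UNIV" by (auto simp: Fle_def coS_le_def posinf_def coS_bot_def)
  then show "k = posinf" using Fbar_eq_posinf_iff[OF assms] by blast
qed (simp add: Fle_def coS_le_def)

lemma Fjoin_is_posinf_iff:
  assumes "Fbar f" and "Fbar g"
  shows "Fjoin_is f g posinf \<longleftrightarrow> (\<forall>k. Fbar k \<and> Fle f k \<and> Fle g k \<longrightarrow> k = posinf)"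
proof
  assume "Fjoin_is f g posinf"
  then show "\<forall>k. Fbar k \<and> Fle f k \<and> Fle g k \<longrightarrow> k = posinf"
    unfolding Fjoin_is_def using posinf_Fle_iff by blast
next
  assume least: "\<forall>k. Fbar k \<and> Fle f k \<and> Fle g k \<longrightarrow> k = posinf"
  have "Fle posinf k" if "Fbar k" "Fle f k" "Fle g k" for k
    using least that posinf_Fle_iff[OF that(1)] by blast
  then show "Fjoin_is f g posinf"
    unfolding Fjoin_is_def using assms by (simp add: Fbar_posinf Fle_posinf)
qed

lemma Inter_less_Inter_less:
  fixes F :: "'b::dense_order \<Rightarrow> 'a set"
  shows "\<Inter>{\<Inter>{F r |r. r < m} |m. m < s} = \<Inter>{F r |r. r < s}"
proof (intro equalityI subsetI InterI)
  fix x X assume x: "x \<in> \<Inter>{\<Inter>{F r |r. r < m} |m. m < s}" and "X \<in> {F r |r. r < s}"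
  then obtain r where "X = F r" "r < s" by blast
  moreover obtain m where "r < m" "m < s" using dense[OF \<open>r < s\<close>] by blast
  ultimately show "x \<in> X" using x by blast
qed (use less_trans in blast)

lemma Inter_greater_Inter_greater:
  fixes F :: "'b::dense_order \<Rightarrow> 'a set"
  shows "\<Inter>{\<Inter>{F s |s. m < s} |m. r < m} = \<Inter>{F s |s. r < s}"
proof (intro equalityI subsetI InterI)
  fix x X assume x: "x \<in> \<Inter>{\<Inter>{F s |s. m < s} |m. r < m}" and "X \<in> {F s |s. r < s}"
  then obtain s where "X = F s" "r < s" by blast
  moreover obtain m where "r < m" "m < s" using dense[OF \<open>r < s\<close>] by blast
  ultimately show "x \<in> X" using x by blast
qed (use less_trans in blast)

definition coS_Sup_less :: "(rat \<Rightarrow> 'a set) \<Rightarrow> rat \<Rightarrow> 'a set" where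
  "coS_Sup_less a s = \<Inter>{a r |r. r < s}"

text \<open>Applied to
  \<open>a(r) = f(---, r) \<and> g(---, r)\<close> it is a common upper bound of \<open>f\<close> and \<open>g\<close>.\<close>
definition Fbar_from_Down :: "(rat \<Rightarrow> 'a::complete_lattice set) \<Rightarrow> gen \<Rightarrow> 'a set" where
  "Fbar_from_Down a x =
    (case x of Down s \<Rightarrow> coS_Sup_less a s | Up r \<Rightarrow> \<Inter>{coS_pc (coS_Sup_less a s) |s. r < s})"

lemma coS_Sup_less_subset: "r < s \<Longrightarrow> coS_Sup_less a s \<subseteq> a r"
  unfolding coS_Sup_less_def by blast

lemma coS_Sup_less_antimono: "r \<le> s \<Longrightarrow> coS_Sup_less a s \<subseteq> coS_Sup_less a r"
  unfolding coS_Sup_less_def by (blast intro: less_le_trans)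

lemma subset_coS_Sup_less: "antimono a \<Longrightarrow> a s \<subseteq> coS_Sup_less a s"
  unfolding coS_Sup_less_def by (blast dest: antimonoD[of a, OF _ less_imp_le])

lemma sublocale_coS_Sup_less: "(\<And>r. sublocale_of (a r)) \<Longrightarrow> sublocale_of (coS_Sup_less a s)"
  unfolding coS_Sup_less_def by (rule sublocale_Inter) blast

lemma coS_Sup_less_subset_pc_pc:
  assumes "antimono a" and regular: "\<And>r s. r < s \<Longrightarrow> a s \<subseteq> coS_pc (coS_pc (a r))"
    and "r < s"
  shows "coS_Sup_less a s \<subseteq> coS_pc (coS_pc (coS_Sup_less a r))"
proof -
  obtain m where "r < m" "m < s" using dense[OF \<open>r < s\<close>] by blast
  have "coS_Sup_less a s \<subseteq> a m" using \<open>m < s\<close> by (rule coS_Sup_less_subset)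
  also have "\<dots> \<subseteq> coS_pc (coS_pc (a r))" using \<open>r < m\<close> by (rule regular)
  also have "\<dots> \<subseteq> coS_pc (coS_pc (coS_Sup_less a r))"
    using subset_coS_Sup_less[OF \<open>antimono a\<close>] by (intro coS_pc_antimono)
  finally show ?thesis .
qed

lemma Fbar_Fbar_from_Down:
  fixes a :: "rat \<Rightarrow> 'a::complete_lattice set"
  assumes frame: "is_frame TYPE('a)" and sublocales: "\<And>r. sublocale_of (a r)"
    and "antimono a" and regular: "\<And>r s. r < s \<Longrightarrow> a s \<subseteq> coS_pc (coS_pc (a r))"
  shows "Fbar (Fbar_from_Down a)"
  unfolding Fbar_def
proof (intro conjI allI impI)
  let ?c = "coS_Sup_less a" and ?e = "\<lambda>r. Fbar_from_Down a (Up r)"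
  have e: "?e r = \<Inter>{coS_pc (?c s) |s. r < s}" for r by (simp add: Fbar_from_Down_def)
  have c_sublocale: "sublocale_of (?c s)" for s by (rule sublocale_coS_Sup_less[OF sublocales])
  show "sublocale_of (Fbar_from_Down a x)" for x
    by (cases x) (auto simp: Fbar_from_Down_def c_sublocale sublocale_coS_pc intro!: sublocale_Inter)
  show "coS_meet (?e r) (Fbar_from_Down a (Down s)) = coS_bot" if "s \<le> r" for r s
  proof -
    have "coS_meet (?c s) (coS_pc (?c s')) = UNIV" if "r < s'" for s'
    proof -
      have "coS_meet (coS_pc (?c s')) (?c s') \<subseteq> coS_meet (coS_pc (?c s')) (?c s)"
        using \<open>s \<le> r\<close> \<open>r < s'\<close> by (intro coS_meet_mono coS_Sup_less_antimono) simp_all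
      then show ?thesis
        using coS_meet_pc_eq_UNIV[OF frame c_sublocale] by (auto simp: coS_meet_commute)
    qed
    then have "coS_meet (?c s) (?e r) = UNIV"
      unfolding e by (intro coS_meet_Inter_eq_UNIV[OF frame c_sublocale]) (auto simp: sublocale_coS_pc)
    then show ?thesis by (simp add: Fbar_from_Down_def coS_bot_def coS_meet_commute)
  qed
  show "?e r = coS_Sup {?e s |s. r < s}" for r
    unfolding coS_Sup_def e by (rule Inter_greater_Inter_greater[symmetric])
  show "Fbar_from_Down a (Down s) = coS_Sup {Fbar_from_Down a (Down r) |r. r < s}" for s
    unfolding coS_Sup_def Fbar_from_Down_def coS_Sup_less_def
    by (simp add: Inter_less_Inter_less)
  show "coS_le (coS_pc (?e r)) (Fbar_from_Down a (Down s))" if "r < s" for r s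
  proof -
    obtain m where "r < m" "m < s" using dense[OF \<open>r < s\<close>] by blast
    then have "?c s \<subseteq> coS_pc (coS_pc (?c m))"
      using coS_Sup_less_subset_pc_pc[OF \<open>antimono a\<close> regular] by blast
    also have "\<dots> \<subseteq> coS_pc (?e r)"
      using \<open>r < m\<close> unfolding e by (intro coS_pc_antimono) blast
    finally show ?thesis by (simp add: coS_le_def Fbar_from_Down_def)
  qed
  show "coS_le (coS_pc (Fbar_from_Down a (Down s))) (?e r)" if "r < s" for r s
    using that by (auto simp: coS_le_def e Fbar_from_Down_def)
qed

lemma Fle_Fbar_from_Down:
  assumes h: "Fbar h" and Down: "\<And>s. h (Down s) \<subseteq> coS_Sup_less a s"
  shows "Fle h (Fbar_from_Down a)"
proof -
  have "Fbar_from_Down a (Up r) \<subseteq> h (Up s)" if "r < s" for r s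
  proof -
    have "coS_meet (h (Up s)) (h (Down s)) \<subseteq> coS_meet (h (Up s)) (coS_Sup_less a s)"
      using Down by (intro coS_meet_mono) simp_all
    then have "coS_pc (coS_Sup_less a s) \<subseteq> h (Up s)"
      using Fbar_meet_Up_Down[OF h order_refl] by (intro coS_pc_least Fbar_sublocale[OF h]) blast
    then show ?thesis using that by (auto simp: Fbar_from_Down_def)
  qed
  then have "Fbar_from_Down a (Up r) \<subseteq> h (Up r)" for r
    by (subst Fbar_Up_eq[OF h]) blast
  then show ?thesis using Down by (simp add: Fle_def coS_le_def Fbar_from_Down_def)
qed

lemma Fjoin_is_posinf_imp_meet_Down:
  fixes f g :: "gen \<Rightarrow> 'a::complete_lattice set"
  assumes frame: "is_frame TYPE('a)" and f: "Fbar f" and g: "Fbar g"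
    and join: "Fjoin_is f g posinf"
  shows "coS_meet (f (Down s)) (g (Down s)) = UNIV"
proof -
  define a where "a r = coS_meet (f (Down r)) (g (Down r))" for r
  have "antimono a"
  proof (rule antimonoI)
    fix r t :: rat assume "r \<le> t"
    then show "a t \<le> a r"
      unfolding a_def by (intro coS_meet_mono Fbar_Down_antimono[OF f] Fbar_Down_antimono[OF g])
  qed
  have regular: "a t \<subseteq> coS_pc (coS_pc (a r))" if "r < t" for r t
  proof -
    have "coS_pc (coS_pc (f (Down r))) \<subseteq> coS_pc (coS_pc (a r))"
      and "coS_pc (coS_pc (g (Down r))) \<subseteq> coS_pc (coS_pc (a r))"
      unfolding a_def by (intro coS_pc_antimono coS_meet_upper1 coS_meet_upper2)+
    then have "f (Down t) \<subseteq> coS_pc (coS_pc (a r))" and "g (Down t) \<subseteq> coS_pc (coS_pc (a r))"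
      using Fbar_Down_subset_pc_pc[OF f \<open>r < t\<close>] Fbar_Down_subset_pc_pc[OF g \<open>r < t\<close>] by blast+
    then show ?thesis unfolding a_def[of t] by (intro coS_meet_least sublocale_coS_pc)
  qed
  have below: "h (Down t) \<subseteq> coS_Sup_less a t"
    if h: "Fbar h" and h_a: "\<And>r. h (Down r) \<subseteq> a r" for h t
  proof -
    have "h (Down t) \<subseteq> a r" if "r < t" for r
      using Fbar_Down_antimono[OF h, of r t] that h_a[of r] by simp
    then show ?thesis unfolding coS_Sup_less_def by blast
  qed
  have "Fbar (Fbar_from_Down a)"
    by (rule Fbar_Fbar_from_Down[OF frame _ \<open>antimono a\<close> regular])
      (simp add: a_def sublocale_coS_meet)
  moreover have "Fle f (Fbar_from_Down a)" and "Fle g (Fbar_from_Down a)"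
    by (intro Fle_Fbar_from_Down f g below; simp add: a_def coS_meet_upper1 coS_meet_upper2)+
  ultimately have "Fbar_from_Down a = posinf"
    using join unfolding Fjoin_is_posinf_iff[OF f g] by blast
  then have "Fbar_from_Down a (Down (s + 1)) = posinf (Down (s + 1))" by simp
  then have "coS_Sup_less a (s + 1) = UNIV" by (simp add: Fbar_from_Down_def posinf_def coS_bot_def)
  then show ?thesis using coS_Sup_less_subset[of s "s + 1" a] by (auto simp: a_def)
qed

lemma Fjoin_is_posinf_imp_eq_posinf:
  fixes f g :: "gen \<Rightarrow> 'a::complete_lattice set"
  assumes frame: "is_frame TYPE('a)" and f: "Fbar f"
    and pc_Down: "coS_pc (coS_Sup (range (\<lambda>s. f (Down s)))) = UNIV"
    and g: "Fbar g" and join: "Fjoin_is f g posinf"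
  shows "g = posinf"
proof -
  have "g (Down s) = UNIV" for s
  proof -
    have "coS_meet (g (Down s)) (f (Down t)) = UNIV" for t
    proof -
      have "coS_meet (f (Down (max s t))) (g (Down (max s t))) \<subseteq> coS_meet (g (Down s)) (f (Down t))"
        unfolding coS_meet_commute[of "g (Down s)"]
        by (intro coS_meet_mono Fbar_Down_antimono[OF f] Fbar_Down_antimono[OF g]) simp_all
      then show ?thesis using Fjoin_is_posinf_imp_meet_Down[OF frame f g join] by blast
    qed
    then have "coS_meet (g (Down s)) (coS_Sup (range (\<lambda>s. f (Down s)))) = UNIV"
      unfolding coS_Sup_def
      by (intro coS_meet_Inter_eq_UNIV[OF frame Fbar_sublocale[OF g]]) (auto simp: Fbar_sublocale[OF f])
    then have "coS_pc (coS_Sup (range (\<lambda>s. f (Down s)))) \<subseteq> g (Down s)"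
      by (rule coS_pc_least[OF Fbar_sublocale[OF g]])
    then show ?thesis using pc_Down by blast
  qed
  then show ?thesis using Fbar_eq_posinf_iff[OF g] by blast
qed

definition const_Down :: "'a::complete_lattice set \<Rightarrow> gen \<Rightarrow> 'a set" where
  "const_Down d x = (case x of Up r \<Rightarrow> coS_pc d | Down s \<Rightarrow> d)"

lemma Fbar_const_Down:
  fixes d :: "'a::complete_lattice set"
  assumes frame: "is_frame TYPE('a)" and "sublocale_of d" and regular: "d \<subseteq> coS_pc (coS_pc d)"
  shows "Fbar (const_Down d)"
  unfolding Fbar_def
proof (intro conjI allI impI)
  show "sublocale_of (const_Down d x)" for x
    using \<open>sublocale_of d\<close> by (cases x) (simp_all add: const_Down_def sublocale_coS_pc)
  show "coS_meet (const_Down d (Up r)) (const_Down d (Down s)) = coS_bot" for r s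
    using coS_meet_pc_eq_UNIV[OF frame \<open>sublocale_of d\<close>] by (simp add: const_Down_def coS_bot_def)
  have "{const_Down d (Up s) |s. r < s} = {coS_pc d}" for r
    using gt_ex[of r] by (auto simp: const_Down_def)
  then show "const_Down d (Up r) = coS_Sup {const_Down d (Up s) |s. r < s}" for r
    by (simp add: coS_Sup_def const_Down_def)
  have "{const_Down d (Down r) |r. r < s} = {d}" for s
    using lt_ex[of s] by (auto simp: const_Down_def)
  then show "const_Down d (Down s) = coS_Sup {const_Down d (Down r) |r. r < s}" for s
    by (simp add: coS_Sup_def const_Down_def)
  show "coS_le (coS_pc (const_Down d (Up r))) (const_Down d (Down s))"
    and "coS_le (coS_pc (const_Down d (Down s))) (const_Down d (Up r))" for r s
    using regular by (simp_all add: const_Down_def coS_le_def)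
qed

lemma coS_pc_Sup_Down_eq_UNIV_if_join_cancel:
  fixes f :: "gen \<Rightarrow> 'a::complete_lattice set"
  assumes frame: "is_frame TYPE('a)" and f: "Fbar f"
    and cancel: "\<forall>g. Fbar g \<and> Fjoin_is f g posinf \<longrightarrow> g = posinf"
  shows "coS_pc (coS_Sup (range (\<lambda>s. f (Down s)))) = UNIV"
proof -
  define D where "D = coS_Sup (range (\<lambda>s. f (Down s)))"
  have "sublocale_of D"
    unfolding D_def coS_Sup_def by (intro sublocale_Inter) (auto simp: Fbar_sublocale[OF f])
  let ?g = "const_Down (coS_pc D)"
  have g: "Fbar ?g"
    using coS_pc_pc_subset[OF frame \<open>sublocale_of D\<close>]
    by (intro Fbar_const_Down[OF frame] sublocale_coS_pc coS_pc_antimono)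
  have "k = posinf" if "Fbar k" and f_k: "Fle f k" and g_k: "Fle ?g k" for k
  proof -
    have "D \<subseteq> k (Down s)" for s
      using f_k unfolding D_def coS_Sup_def Fle_def coS_le_def by blast
    moreover have "coS_pc D \<subseteq> k (Down s)" for s
      using g_k unfolding Fle_def coS_le_def const_Down_def by simp
    ultimately have "coS_meet (coS_pc D) D \<subseteq> k (Down s)" for s
      by (intro coS_meet_least Fbar_sublocale[OF \<open>Fbar k\<close>])
    then show ?thesis
      using coS_meet_pc_eq_UNIV[OF frame \<open>sublocale_of D\<close>] Fbar_eq_posinf_iff[OF \<open>Fbar k\<close>] by auto
  qed
  then have "?g = posinf" using cancel g Fjoin_is_posinf_iff[OF f g] by blast
  then have "?g (Down 0) = posinf (Down 0)" by simp
  then show ?thesis by (simp add: D_def const_Down_def posinf_def coS_bot_def)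
qed

lemma coS_pc_Sup_Down_eq_coS_Inf_Up:
  fixes f :: "gen \<Rightarrow> 'a::complete_lattice set"
  assumes frame: "is_frame TYPE('a)" and f: "Fbar f"
  shows "coS_pc (coS_Sup (range (\<lambda>s. f (Down s)))) = coS_Inf (range (\<lambda>r. f (Up r)))"
    (is "coS_pc ?D = ?U")
proof
  have "f (Up r) \<subseteq> coS_pc ?D" for r
  proof -
    have "f (Up r) \<subseteq> coS_pc (f (Down (r + 1)))" by (rule Fbar_Up_subset_pc_Down[OF f]) simp
    also have "\<dots> \<subseteq> coS_pc ?D" unfolding coS_Sup_def by (intro coS_pc_antimono) blast
    finally show ?thesis .
  qed
  then show "?U \<subseteq> coS_pc ?D" by (intro coS_Inf_least sublocale_coS_pc) blast
  have "coS_meet (f (Up s)) (f (Down s)) \<subseteq> coS_meet ?U (f (Down s))" for s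
    by (intro coS_meet_mono coS_Inf_upper) simp_all
  then have "coS_meet ?U ?D = UNIV"
    unfolding coS_Sup_def using Fbar_meet_Up_Down[OF f order_refl]
    by (intro coS_meet_Inter_eq_UNIV[OF frame sublocale_coS_Inf]) (auto simp: Fbar_sublocale[OF f])
  then show "coS_pc ?D \<subseteq> ?U" by (rule coS_pc_least[OF sublocale_coS_Inf])
qed

theorem proposition5p3:
  fixes f :: "gen \<Rightarrow> 'a::complete_lattice set"
  assumes "is_frame TYPE('a)"
    and "Fbar f"
  shows "((\<forall>g. Fbar g \<and> Fjoin_is f g posinf \<longrightarrow> g = posinf)
            \<longleftrightarrow> coS_pc (coS_Sup (range (\<lambda>s. f (Down s)))) = coS_bot)
       \<and> (coS_pc (coS_Sup (range (\<lambda>s. f (Down s)))) = coS_bot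
            \<longleftrightarrow> coS_Inf (range (\<lambda>r. f (Up r))) = coS_bot)"
  unfolding coS_bot_def coS_pc_Sup_Down_eq_coS_Inf_Up[OF assms, symmetric]
  using Fjoin_is_posinf_imp_eq_posinf[OF assms] coS_pc_Sup_Down_eq_UNIV_if_join_cancel[OF assms]
  by blast

end
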